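(* Under the standing assumptions, suppose $\varphi$ is lower semicontinuous on $X$, and let $\rho_k\to\infty$, $\sigma_k\to0$ with $\rho_k,\sigma_k>0$. Then for any sequence $\{x_k\}\subset X$ with $x_k\to\bar x$, every accumulation point of $\{y^*_{\rho_k,\sigma_k}(x_k)\}$ belongs to $\arg\max\{f(\bar x,y): y\in Y,\ c(\bar x,y)\le0\}$.
   Context: Standing assumptions: $X\subset\mathbb{R}^n$, $Y\subset\mathbb{R}^m$ nonempty, convex, compact; $f$ continuously differentiable with Lipschitz gradient on $X\times Y$, $f(x,\cdot)$ concave on $Y$; $c=(c_1,\dots,c_p)$ with continuously differentiable components having Lipschitz gradients, each $c_i(x,\cdot)$ convex on $Y$; $\Theta(x):=\{y\in Y:c(x,y)\le0\}\neq\emptyset$ for all $x\in X$. Notation: $[z]_+=\max\{z,0\}$ componentwise; $\varphi(x):=\max_{y\in\Theta(x)}f(x,y)$; $\psi_{\rho,\sigma}(x,y):=f(x,y)-\frac{\rho}{2}\|[c(x,y)]_+\|^2-\frac{\sigma}{2}\|y\|^2$; $y^*_{\rho,\sigma}(x)$ is the unique maximizer of $\psi_{\rho,\sigma}(x,\cdot)$ over $Y$. *)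

theory Defs
  imports "HOL-Analysis.Analysis"
begin

definition C11_on :: "'z::euclidean_space set \<Rightarrow> ('z \<Rightarrow> real) \<Rightarrow> bool" where
  "C11_on S g \<longleftrightarrow> (\<exists>U g'. open U \<and> S \<subseteq> U \<and>
      (\<forall>z\<in>U. (g has_derivative (\<lambda>h. g' z \<bullet> h)) (at z)) \<and>
      continuous_on U g' \<and> (\<exists>L. L-lipschitz_on S g'))"

definition Theta :: "'b set \<Rightarrow> (nat \<Rightarrow> 'a \<Rightarrow> 'b \<Rightarrow> real) \<Rightarrow> nat \<Rightarrow> 'a \<Rightarrow> 'b set" where
  "Theta Y c p x = {y \<in> Y. \<forall>i<p. c i x y \<le> 0}"

definition phi :: "'b set \<Rightarrow> ('a \<Rightarrow> 'b \<Rightarrow> real) \<Rightarrow> (nat \<Rightarrow> 'a \<Rightarrow> 'b \<Rightarrow> real) \<Rightarrow> nat \<Rightarrow> 'a \<Rightarrow> real" where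
  "phi Y f c p x = Sup ((f x) ` Theta Y c p x)"

definition psi :: "('a \<Rightarrow> 'b::real_normed_vector \<Rightarrow> real) \<Rightarrow> (nat \<Rightarrow> 'a \<Rightarrow> 'b \<Rightarrow> real) \<Rightarrow> nat
    \<Rightarrow> real \<Rightarrow> real \<Rightarrow> 'a \<Rightarrow> 'b \<Rightarrow> real" where
  "psi f c p \<rho> \<sigma> x y = f x y - \<rho> / 2 * (\<Sum>i<p. (max (c i x y) 0)^2) - \<sigma> / 2 * (norm y)^2"

definition ystar :: "'b::real_normed_vector set \<Rightarrow> ('a \<Rightarrow> 'b \<Rightarrow> real) \<Rightarrow> (nat \<Rightarrow> 'a \<Rightarrow> 'b \<Rightarrow> real)
    \<Rightarrow> nat \<Rightarrow> real \<Rightarrow> real \<Rightarrow> 'a \<Rightarrow> 'b" where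
  "ystar Y f c p \<rho> \<sigma> x = (THE y. y \<in> Y \<and> (\<forall>y'\<in>Y. psi f c p \<rho> \<sigma> x y' \<le> psi f c p \<rho> \<sigma> x y))"

end

theory Submission
  imports Defs
begin

text \<open>The penalized objective is strongly concave in y, so its maximizer over Y is unique.
  Comparing the maximizer y_k with a feasible point bounds rho_k times its penalty uniformly, so the
  penalty tends to 0 and every limit point is feasible. The same comparison gives
  phi(x_k) <= f(x_k, y_k) + sigma_k R^2 / 2 for a bound R of Y, and lower semicontinuity of phi
  carries this to the limit as phi(xbar) <= f(xbar, ybar), which is optimality.\<close>

lemma C11_on_imp_continuous_on: "C11_on S g \<Longrightarrow> continuous_on S g"
  unfolding C11_on_def
  by (meson continuous_at_imp_continuous_on has_derivative_continuous subsetD)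

lemma continuous_on_slice:
  assumes "continuous_on (X \<times> Y) (\<lambda>(x, y). g x y)" "x \<in> X"
  shows "continuous_on Y (g x)"
  using continuous_on_compose2[OF assms(1) continuous_on_Pair[OF continuous_on_const continuous_on_id]]
    assms(2) by auto

lemma tendsto_0_if_mult_at_top_bounded:
  fixes a \<rho> :: "'i \<Rightarrow> real"
  assumes "\<forall>\<^sub>F k in F. \<rho> k * a k \<le> C" "\<forall>\<^sub>F k in F. 0 \<le> a k" "filterlim \<rho> at_top F"
  shows "(a \<longlongrightarrow> 0) F"
proof (rule tendsto_sandwich[of "\<lambda>_. 0" a F "\<lambda>k. C / \<rho> k"])
  have "\<forall>\<^sub>F k in F. 0 < \<rho> k"
    using assms(3) by (simp add: filterlim_at_top_dense)
  with assms(1) show "\<forall>\<^sub>F k in F. a k \<le> C / \<rho> k"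
    by eventually_elim (simp add: field_simps mult.commute)
  show "((\<lambda>k. C / \<rho> k) \<longlongrightarrow> 0) F"
    by (rule tendsto_divide_0[OF tendsto_const filterlim_at_top_imp_at_infinity[OF assms(3)]])
qed (use assms(2) in auto)

lemma convex_on_midpoint_le:
  "convex_on Y g \<Longrightarrow> a \<in> Y \<Longrightarrow> b \<in> Y \<Longrightarrow> g (midpoint a b) \<le> (g a + g b) / 2"
  using convex_onD[of Y g "1/2" a b] by (simp add: midpoint_def scaleR_add_right)

lemma concave_on_midpoint_ge:
  "concave_on Y g \<Longrightarrow> a \<in> Y \<Longrightarrow> b \<in> Y \<Longrightarrow> (g a + g b) / 2 \<le> g (midpoint a b)"
  using convex_on_midpoint_le[of Y "\<lambda>y. - g y" a b] by (simp add: concave_on_def)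

lemma midpoint_in_convex: "convex Y \<Longrightarrow> a \<in> Y \<Longrightarrow> b \<in> Y \<Longrightarrow> midpoint a b \<in> Y"
  using convexD[of Y a b "1/2" "1/2"] by (simp add: midpoint_def scaleR_add_right)

lemma power2_norm_midpoint:
  fixes a b :: "'a::real_inner"
  shows "(norm (midpoint a b))\<^sup>2 = ((norm a)\<^sup>2 + (norm b)\<^sup>2) / 2 - (norm (a - b))\<^sup>2 / 4"
  by (simp add: midpoint_def power2_norm_eq_inner inner_add_left inner_add_right
      inner_diff_left inner_diff_right inner_commute field_simps)

lemma power2_max_0_le_midpoint:
  fixes u v w :: real
  assumes "w \<le> (u + v) / 2"
  shows "(max w 0)\<^sup>2 \<le> ((max u 0)\<^sup>2 + (max v 0)\<^sup>2) / 2"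
proof -
  have "(max w 0)\<^sup>2 \<le> ((max u 0 + max v 0) / 2)\<^sup>2"
    using assms by (intro power_mono) auto
  also have "\<dots> \<le> ((max u 0)\<^sup>2 + (max v 0)\<^sup>2) / 2"
    using zero_le_power2[of "max u 0 - max v 0"] by (simp add: power2_eq_square algebra_simps)
  finally show ?thesis .
qed

definition penalty :: "(nat \<Rightarrow> 'a \<Rightarrow> 'b \<Rightarrow> real) \<Rightarrow> nat \<Rightarrow> 'a \<Rightarrow> 'b \<Rightarrow> real" where
  "penalty c p x y = (\<Sum>i<p. (max (c i x y) 0)\<^sup>2)"

lemma psi_eq_penalty:
  "psi f c p \<rho> \<sigma> x y = f x y - \<rho> / 2 * penalty c p x y - \<sigma> / 2 * (norm y)\<^sup>2"
  by (simp add: psi_def penalty_def)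

lemma penalty_nonneg: "0 \<le> penalty c p x y"
  by (simp add: penalty_def sum_nonneg)

lemma Theta_iff_penalty_eq_0: "y \<in> Theta Y c p x \<longleftrightarrow> y \<in> Y \<and> penalty c p x y = 0"
  by (auto simp add: Theta_def penalty_def sum_nonneg_eq_0_iff max_def)

lemma penalty_midpoint_le:
  assumes "\<forall>i<p. convex_on Y (c i x)" "a \<in> Y" "b \<in> Y"
  shows "penalty c p x (midpoint a b) \<le> (penalty c p x a + penalty c p x b) / 2"
proof -
  have "penalty c p x (midpoint a b) \<le> (\<Sum>i<p. ((max (c i x a) 0)\<^sup>2 + (max (c i x b) 0)\<^sup>2) / 2)"
    unfolding penalty_def
    by (intro sum_mono power2_max_0_le_midpoint convex_on_midpoint_le) (use assms in auto)
  then show ?thesis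
    by (simp add: penalty_def sum_divide_distrib[symmetric] sum.distrib)
qed

lemma psi_midpoint_ge:
  fixes Y :: "'b::real_inner set"
  assumes "concave_on Y (f x)" "\<forall>i<p. convex_on Y (c i x)" "0 \<le> \<rho>" "a \<in> Y" "b \<in> Y"
  shows "(psi f c p \<rho> \<sigma> x a + psi f c p \<rho> \<sigma> x b) / 2 + \<sigma> / 8 * (norm (a - b))\<^sup>2
    \<le> psi f c p \<rho> \<sigma> x (midpoint a b)"
proof -
  have "\<rho> * penalty c p x (midpoint a b) \<le> \<rho> * ((penalty c p x a + penalty c p x b) / 2)"
    using penalty_midpoint_le[of p Y c x a b] assms(2-5) by (intro mult_left_mono) auto
  then show ?thesis
    using concave_on_midpoint_ge[OF assms(1,4,5)]
    by (simp add: psi_eq_penalty power2_norm_midpoint field_simps)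
qed

lemma argmax_unique_if_midpoint_strict:
  fixes P :: "'a::real_vector \<Rightarrow> real"
  assumes "convex Y"
    and strict: "\<And>a b. a \<in> Y \<Longrightarrow> b \<in> Y \<Longrightarrow> a \<noteq> b \<Longrightarrow> (P a + P b) / 2 < P (midpoint a b)"
    and "a \<in> Y" "\<forall>y\<in>Y. P y \<le> P a" "b \<in> Y" "\<forall>y\<in>Y. P y \<le> P b"
  shows "a = b"
proof (rule ccontr)
  assume "a \<noteq> b"
  then have "(P a + P b) / 2 < P (midpoint a b)"
    using strict assms(3,5) by blast
  moreover have "P (midpoint a b) \<le> P a"
    using assms(1,3-5) midpoint_in_convex by blast
  moreover have "P a = P b"
    using assms(3-6) by (meson order_antisym)
  ultimately show False by simp
qed

lemma ystar_is_argmax: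
  fixes Y :: "'b::real_inner set"
  assumes Y: "compact Y" "Y \<noteq> {}" "convex Y" and "0 \<le> \<rho>" "0 < \<sigma>"
    and "continuous_on Y (f x)" "\<forall>i<p. continuous_on Y (c i x)"
    and "concave_on Y (f x)" "\<forall>i<p. convex_on Y (c i x)"
  shows "ystar Y f c p \<rho> \<sigma> x \<in> Y \<and>
    (\<forall>y\<in>Y. psi f c p \<rho> \<sigma> x y \<le> psi f c p \<rho> \<sigma> x (ystar Y f c p \<rho> \<sigma> x))"
proof -
  let ?P = "psi f c p \<rho> \<sigma> x"
  have "continuous_on Y ?P"
    unfolding psi_def using assms(6,7) by (auto intro!: continuous_intros)
  then obtain a where a: "a \<in> Y" "\<forall>y\<in>Y. ?P y \<le> ?P a"
    using continuous_attains_sup[OF Y(1,2)] by blast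
  have "(?P a + ?P b) / 2 < ?P (midpoint a b)" if "a \<in> Y" "b \<in> Y" "a \<noteq> b" for a b
  proof -
    have "0 < \<sigma> / 8 * (norm (a - b))\<^sup>2"
      using \<open>0 < \<sigma>\<close> that(3) by simp
    then show ?thesis
      using psi_midpoint_ge[where f = f and c = c and x = x and \<sigma> = \<sigma>, OF assms(8,9,4) that(1,2)] by linarith
  qed
  then have "\<exists>!y. y \<in> Y \<and> (\<forall>y'\<in>Y. ?P y' \<le> ?P y)"
    using a argmax_unique_if_midpoint_strict[OF Y(3)] by blast
  then show ?thesis
    unfolding ystar_def by (rule theI')
qed

lemma psi_maximizer_ge_feasible:
  assumes "\<forall>y'\<in>Y. psi f c p \<rho> \<sigma> x y' \<le> psi f c p \<rho> \<sigma> x y"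
    and "z \<in> Theta Y c p x" "\<forall>y\<in>Y. norm y \<le> R" "0 \<le> \<sigma>"
  shows "f x z - \<sigma> / 2 * R\<^sup>2 \<le> psi f c p \<rho> \<sigma> x y"
proof -
  have z: "z \<in> Y" "penalty c p x z = 0"
    using assms(2) by (simp_all add: Theta_iff_penalty_eq_0)
  have "(norm z)\<^sup>2 \<le> R\<^sup>2"
    using assms(3) z(1) by (intro power_mono) auto
  then have "f x z - \<sigma> / 2 * R\<^sup>2 \<le> psi f c p \<rho> \<sigma> x z"
    using assms(4) z(2) by (simp add: psi_eq_penalty mult_left_mono)
  also have "\<dots> \<le> psi f c p \<rho> \<sigma> x y"
    using assms(1) z(1) by blast
  finally show ?thesis .
qed

lemma penalty_at_psi_maximizer_le:
  assumes "\<forall>y'\<in>Y. psi f c p \<rho> \<sigma> x y' \<le> psi f c p \<rho> \<sigma> x y"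
    and "z \<in> Theta Y c p x" "\<forall>y\<in>Y. norm y \<le> R" "0 \<le> \<sigma>"
  shows "\<rho> * penalty c p x y \<le> 2 * (f x y - f x z) + \<sigma> * R\<^sup>2"
proof -
  have "0 \<le> \<sigma> / 2 * (norm y)\<^sup>2"
    using assms(4) by simp
  then show ?thesis
    using psi_maximizer_ge_feasible[OF assms] by (simp add: psi_eq_penalty field_simps)
qed

lemma phi_le_at_psi_maximizer:
  assumes "\<forall>y'\<in>Y. psi f c p \<rho> \<sigma> x y' \<le> psi f c p \<rho> \<sigma> x y"
    and "Theta Y c p x \<noteq> {}" "\<forall>y\<in>Y. norm y \<le> R" "0 \<le> \<rho>" "0 \<le> \<sigma>"
  shows "phi Y f c p x \<le> f x y + \<sigma> / 2 * R\<^sup>2"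
proof -
  have "0 \<le> \<rho> / 2 * penalty c p x y" "0 \<le> \<sigma> / 2 * (norm y)\<^sup>2"
    using assms(4,5) penalty_nonneg[of c p x y] by simp_all
  then have "psi f c p \<rho> \<sigma> x y \<le> f x y"
    unfolding psi_eq_penalty by linarith
  then have "f x z \<le> f x y + \<sigma> / 2 * R\<^sup>2" if "z \<in> Theta Y c p x" for z
    using psi_maximizer_ge_feasible[OF assms(1) that assms(3,5)] by linarith
  then show ?thesis
    unfolding phi_def using assms(2) by (intro cSup_least) auto
qed

lemma f_le_phi:
  assumes "compact Y" "continuous_on Y (f x)" "y \<in> Theta Y c p x"
  shows "f x y \<le> phi Y f c p x"
proof -
  have "bdd_above (f x ` Y)"
    using assms(1,2) by (intro bounded_imp_bdd_above compact_imp_bounded compact_continuous_image)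
  then have "bdd_above (f x ` Theta Y c p x)"
    by (rule bdd_above_mono) (auto simp: Theta_def)
  then show ?thesis
    unfolding phi_def using assms(3) by (intro cSup_upper) auto
qed

locale penalized_maximizers =
  fixes X :: "'a::metric_space set" and Y :: "'b::real_normed_vector set"
    and f :: "'a \<Rightarrow> 'b \<Rightarrow> real" and c :: "nat \<Rightarrow> 'a \<Rightarrow> 'b \<Rightarrow> real" and p :: nat
    and \<rho> \<sigma> :: "nat \<Rightarrow> real" and xs :: "nat \<Rightarrow> 'a" and xbar :: 'a
    and ys :: "nat \<Rightarrow> 'b" and ybar :: 'b
  assumes compact_X: "compact X" and compact_Y: "compact Y"
    and f_cont: "continuous_on (X \<times> Y) (\<lambda>(x, y). f x y)"
    and c_cont: "\<And>i. i < p \<Longrightarrow> continuous_on (X \<times> Y) (\<lambda>(x, y). c i x y)"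
    and Theta_ne: "\<And>x. x \<in> X \<Longrightarrow> Theta Y c p x \<noteq> {}"
    and rho_nonneg: "\<And>k. 0 \<le> \<rho> k" and rho_lim: "filterlim \<rho> at_top sequentially"
    and sigma_nonneg: "\<And>k. 0 \<le> \<sigma> k" and sigma_lim: "\<sigma> \<longlonglongrightarrow> 0"
    and xs_in: "\<And>k. xs k \<in> X" and xs_lim: "xs \<longlonglongrightarrow> xbar"
    and ys_in: "\<And>k. ys k \<in> Y"
    and ys_max: "\<And>k. \<forall>y\<in>Y. psi f c p (\<rho> k) (\<sigma> k) (xs k) y \<le> psi f c p (\<rho> k) (\<sigma> k) (xs k) (ys k)"
    and ys_lim: "ys \<longlonglongrightarrow> ybar"
begin

lemma xbar_in: "xbar \<in> X"
  using closed_sequentially[OF compact_imp_closed[OF compact_X] xs_in xs_lim] .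

lemma ybar_in: "ybar \<in> Y"
  using closed_sequentially[OF compact_imp_closed[OF compact_Y] ys_in ys_lim] .

lemma tendsto_continuous_along:
  assumes "continuous_on (X \<times> Y) (\<lambda>(x, y). g x y)"
  shows "(\<lambda>k. g (xs k) (ys k)) \<longlonglongrightarrow> g xbar ybar"
  using continuous_on_tendsto_compose[OF assms tendsto_Pair[OF xs_lim ys_lim]]
    xs_in ys_in xbar_in ybar_in by simp

lemma Y_norm_bounded: obtains R where "\<forall>y\<in>Y. norm y \<le> R"
  using compact_imp_bounded[OF compact_Y] by (auto simp: bounded_iff)

lemma penalty_tendsto_0: "(\<lambda>k. penalty c p (xs k) (ys k)) \<longlonglongrightarrow> 0"
proof -
  obtain R where R: "\<forall>y\<in>Y. norm y \<le> R"
    using Y_norm_bounded .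
  obtain B where B: "\<forall>x\<in>X. \<forall>y\<in>Y. \<bar>f x y\<bar> \<le> B"
    using compact_imp_bounded[OF compact_continuous_image[OF f_cont compact_Times[OF compact_X compact_Y]]]
    by (force simp: bounded_real)
  have "\<rho> k * penalty c p (xs k) (ys k) \<le> 4 * B + R\<^sup>2" if "\<sigma> k < 1" for k
  proof -
    obtain z where z: "z \<in> Theta Y c p (xs k)"
      using Theta_ne[OF xs_in] by blast
    then have "z \<in> Y"
      by (simp add: Theta_def)
    have "\<sigma> k * R\<^sup>2 \<le> R\<^sup>2"
      using that mult_right_mono[of "\<sigma> k" 1 "R\<^sup>2"] by simp
    moreover have "f (xs k) (ys k) \<le> B" "- f (xs k) z \<le> B"
      using B xs_in[of k] ys_in[of k] \<open>z \<in> Y\<close> by (force simp: abs_le_iff)+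
    ultimately show ?thesis
      using penalty_at_psi_maximizer_le[OF ys_max z R sigma_nonneg] by argo
  qed
  then have "\<forall>\<^sub>F k in sequentially. \<rho> k * penalty c p (xs k) (ys k) \<le> 4 * B + R\<^sup>2"
    using order_tendstoD(2)[OF sigma_lim, of 1] eventually_mono by force
  then show ?thesis
    by (rule tendsto_0_if_mult_at_top_bounded[OF _ _ rho_lim]) (simp add: penalty_nonneg)
qed

theorem limit_feasible: "ybar \<in> Theta Y c p xbar"
proof -
  have "(\<lambda>k. penalty c p (xs k) (ys k)) \<longlonglongrightarrow> penalty c p xbar ybar"
    unfolding penalty_def by (intro tendsto_intros tendsto_continuous_along c_cont) simp
  then have "penalty c p xbar ybar = 0"
    using penalty_tendsto_0 LIMSEQ_unique by blast
  then show ?thesis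
    using ybar_in by (simp add: Theta_iff_penalty_eq_0)
qed

lemma phi_le_at_limit:
  assumes phi_lsc: "\<And>e. 0 < e \<Longrightarrow> \<exists>d>0. \<forall>x\<in>X. dist x xbar < d \<longrightarrow> phi Y f c p xbar - e < phi Y f c p x"
  shows "phi Y f c p xbar \<le> f xbar ybar"
proof (rule field_le_epsilon)
  fix e :: real
  assume "0 < e"
  then obtain d where d: "0 < d" "\<forall>x\<in>X. dist x xbar < d \<longrightarrow> phi Y f c p xbar - e < phi Y f c p x"
    using phi_lsc by blast
  obtain R where R: "\<forall>y\<in>Y. norm y \<le> R"
    using Y_norm_bounded .
  have "phi Y f c p xbar - e - \<sigma> k / 2 * R\<^sup>2 \<le> f (xs k) (ys k)"
    if "dist (xs k) xbar < d" for k
    using d(2) xs_in[of k] that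
      phi_le_at_psi_maximizer[OF ys_max Theta_ne[OF xs_in] R rho_nonneg sigma_nonneg, of k]
    by force
  then have "\<forall>\<^sub>F k in sequentially. phi Y f c p xbar - e - \<sigma> k / 2 * R\<^sup>2 \<le> f (xs k) (ys k)"
    using tendstoD[OF xs_lim d(1)] by (auto elim: eventually_mono)
  moreover have "(\<lambda>k. phi Y f c p xbar - e - \<sigma> k / 2 * R\<^sup>2) \<longlonglongrightarrow> phi Y f c p xbar - e"
    using sigma_lim by (auto intro!: tendsto_eq_intros)
  ultimately have "phi Y f c p xbar - e \<le> f xbar ybar"
    using tendsto_le[OF trivial_limit_sequentially tendsto_continuous_along[OF f_cont]] by blast
  then show "phi Y f c p xbar \<le> f xbar ybar + e"
    by simp
qed

theorem limit_optimal:
  assumes "\<And>e. 0 < e \<Longrightarrow> \<exists>d>0. \<forall>x\<in>X. dist x xbar < d \<longrightarrow> phi Y f c p xbar - e < phi Y f c p x"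
    and "y \<in> Theta Y c p xbar"
  shows "f xbar y \<le> f xbar ybar"
proof -
  have "f xbar y \<le> phi Y f c p xbar"
    by (rule f_le_phi[where f = f, OF compact_Y continuous_on_slice[OF f_cont xbar_in] assms(2)])
  also have "\<dots> \<le> f xbar ybar"
    by (rule phi_le_at_limit[OF assms(1)])
  finally show ?thesis .
qed

end

theorem lemmaC4:
  fixes X :: "'a::euclidean_space set" and Y :: "'b::euclidean_space set"
    and f :: "'a \<Rightarrow> 'b \<Rightarrow> real" and c :: "nat \<Rightarrow> 'a \<Rightarrow> 'b \<Rightarrow> real" and p :: nat
    and \<rho> \<sigma> :: "nat \<Rightarrow> real" and xs :: "nat \<Rightarrow> 'a" and xbar :: 'a and ybar :: 'b
  assumes X: "X \<noteq> {}" "convex X" "compact X"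
    and Y: "Y \<noteq> {}" "convex Y" "compact Y"
    and f_smooth: "C11_on (X \<times> Y) (\<lambda>(x, y). f x y)"
    and f_concave: "\<forall>x\<in>X. concave_on Y (f x)"
    and c_smooth: "\<forall>i<p. C11_on (X \<times> Y) (\<lambda>(x, y). c i x y)"
    and c_convex: "\<forall>i<p. \<forall>x\<in>X. convex_on Y (c i x)"
    and Theta_ne: "\<forall>x\<in>X. Theta Y c p x \<noteq> {}"
    and phi_lsc: "\<forall>x\<in>X. \<forall>e>0. \<exists>d>0. \<forall>x'\<in>X. dist x' x < d \<longrightarrow> phi Y f c p x - e < phi Y f c p x'"
    and rho_pos: "\<forall>k. \<rho> k > 0" and rho_lim: "filterlim \<rho> at_top sequentially"
    and sigma_pos: "\<forall>k. \<sigma> k > 0" and sigma_lim: "\<sigma> \<longlonglongrightarrow> 0"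
    and xs_in: "\<forall>k. xs k \<in> X" and xs_lim: "xs \<longlonglongrightarrow> xbar"
    and acc: "\<exists>r. strict_mono r \<and> ((\<lambda>k. ystar Y f c p (\<rho> k) (\<sigma> k) (xs k)) \<circ> r) \<longlonglongrightarrow> ybar"
  shows "ybar \<in> Theta Y c p xbar \<and> (\<forall>y\<in>Theta Y c p xbar. f xbar y \<le> f xbar ybar)"
proof -
  have f_cont: "continuous_on (X \<times> Y) (\<lambda>(x, y). f x y)"
    by (rule C11_on_imp_continuous_on[OF f_smooth])
  have c_cont: "continuous_on (X \<times> Y) (\<lambda>(x, y). c i x y)" if "i < p" for i
    using C11_on_imp_continuous_on c_smooth that by blast
  define ys where "ys k = ystar Y f c p (\<rho> k) (\<sigma> k) (xs k)" for k
  have ys_argmax: "ys k \<in> Y \<and>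
      (\<forall>y\<in>Y. psi f c p (\<rho> k) (\<sigma> k) (xs k) y \<le> psi f c p (\<rho> k) (\<sigma> k) (xs k) (ys k))" for k
    unfolding ys_def using Y rho_pos sigma_pos xs_in f_concave c_convex
    by (intro ystar_is_argmax continuous_on_slice[OF f_cont] continuous_on_slice[OF c_cont] allI impI)
      (auto simp: less_imp_le)
  obtain r where r: "strict_mono r" "(ys \<circ> r) \<longlonglongrightarrow> ybar"
    using acc unfolding ys_def comp_def by blast
  interpret penalized_maximizers X Y f c p "\<rho> \<circ> r" "\<sigma> \<circ> r" "xs \<circ> r" xbar "ys \<circ> r" ybar
    using X Y f_cont c_cont Theta_ne rho_pos sigma_pos xs_in ys_argmax r
      filterlim_compose[OF rho_lim filterlim_subseq[OF r(1)]]
      LIMSEQ_subseq_LIMSEQ[OF sigma_lim r(1)] LIMSEQ_subseq_LIMSEQ[OF xs_lim r(1)]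
    by unfold_locales (auto simp: less_imp_le o_def)
  show ?thesis
    using limit_feasible limit_optimal phi_lsc xbar_in by blast
qed

end
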